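(* Let $A$ be a unital associative $\Bbbk$-algebra, $a\in Z(A)$, $\sigma\in Aut(A)$, and $W_{a,\sigma}$ the generalized Weyl algebra. Let $S\subseteq Z(A)$ be the set of elements $\sigma^n(a^m)$ with $n\in\mathbb{Z}$, $m\in\mathbb{N}$, and let $(W_{a,\sigma})_S$ be the localization of $W_{a,\sigma}$ at $S$. Let $V$ be an arbitrary (right) $W_{a,\sigma}$-module and $h=ht_{a,\sigma}(V)$. Then $V_S:=V\otimes_{W_{a,\sigma}}(W_{a,\sigma})_S$ is isomorphic to $(V/V^{[h]})_S$.
   Context: The generalized Weyl algebra $W_{a,\sigma}$ is the algebra generated by $A$ and indeterminates $x,y$ with relations $yx=a$, $xy=\sigma(a)$, $xu=\sigma(u)x$, $y\sigma(u)=uy$ for $u\in A$. For a right $W_{a,\sigma}$-module $V$ and $\ell\in\mathbb{N}$, set $V^{[\ell]}=\{v\in V : v\triangleleft a\sigma^{-1}(a)\cdots\sigma^{-\ell}(a)=0\}$, and $V^{[\infty]}=\bigcup_{\ell\geq 0}V^{[\ell]}$. The height $ht_{a,\sigma}(V)$ is the smallest integer $\ell$ with $V^{[\ell]}=V^{[\infty]}$, and $\infty$ if no such integer exists (in which case $V^{[h]}$ means $V^{[\infty]}$). For a $W_{a,\sigma}$-module $U$, $U_S:=U\otimes_{W_{a,\sigma}}(W_{a,\sigma})_S$.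
   Formalization: $V/V^{[h]}$ is the quotient of V by the $W_{a,\sigma}$-submodule generated by $V^{[h]}$, and $(W_{a,\sigma})_S$ is any given right ring of fractions of $W_{a,\sigma}$ with respect to the multiplicative closure of S. Each condition added here is assumed in the paper as well or is needed for the statement above to hold. *)

theory Defs
  imports "HOL-Algebra.Algebra" "HOL-Library.Poly_Mapping" "HOL-Library.Extended_Nat"
begin

definition center :: "('a, 'b) ring_scheme \<Rightarrow> 'a set" where
  "center A = {c \<in> carrier A. \<forall>u \<in> carrier A. c \<otimes>\<^bsub>A\<^esub> u = u \<otimes>\<^bsub>A\<^esub> c}"

definition sigma_pow :: "('a, 'b) ring_scheme \<Rightarrow> ('a \<Rightarrow> 'a) \<Rightarrow> int \<Rightarrow> 'a \<Rightarrow> 'a" where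
  "sigma_pow A \<sigma> n = (if 0 \<le> n then \<sigma> ^^ nat n else inv_into (carrier A) \<sigma> ^^ nat (- n))"

definition S_set :: "('a, 'b) ring_scheme \<Rightarrow> ('a \<Rightarrow> 'a) \<Rightarrow> 'a \<Rightarrow> 'a set" where
  "S_set A \<sigma> a = {sigma_pow A \<sigma> n (a [^]\<^bsub>A\<^esub> (m::nat)) | n m. True}"

inductive_set mult_closure :: "('a, 'b) ring_scheme \<Rightarrow> 'a set \<Rightarrow> 'a set"
  for A :: "('a, 'b) ring_scheme" and S :: "'a set" where
  one: "\<one>\<^bsub>A\<^esub> \<in> mult_closure A S"
| gen: "s \<in> S \<Longrightarrow> s \<in> mult_closure A S"
| mult: "s \<in> mult_closure A S \<Longrightarrow> t \<in> mult_closure A S \<Longrightarrow> s \<otimes>\<^bsub>A\<^esub> t \<in> mult_closure A S"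

text \<open>Symbols: Inl u stands for the element u of A, Inr True for x, Inr False for y.
  The free (noncommutative) ring on these symbols is the monoid ring Z[words].\<close>

type_synonym 'a fword = "('a + bool) list \<Rightarrow>\<^sub>0 int"

definition fconv :: "'a fword \<Rightarrow> 'a fword \<Rightarrow> 'a fword" where
  "fconv p q = (\<Sum>u\<in>Poly_Mapping.keys p. \<Sum>v\<in>Poly_Mapping.keys q.
      Poly_Mapping.single (u @ v) (Poly_Mapping.lookup p u * Poly_Mapping.lookup q v))"

definition free_ring :: "'a fword ring" where
  "free_ring = \<lparr>carrier = UNIV, monoid.mult = fconv, one = Poly_Mapping.single [] 1,
                ring.zero = 0, ring.add = (+)\<rparr>"

definition letter :: "('a + bool) \<Rightarrow> 'a fword" where
  "letter s = Poly_Mapping.single [s] 1"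

abbreviation "gx \<equiv> letter (Inr True)"
abbreviation "gy \<equiv> letter (Inr False)"

text \<open>Defining relations (elements required to become zero): A embeds as a unital
  subring (symbols not in the carrier of A are killed), yx = a, xy = sigma(a),
  x u = sigma(u) x, y sigma(u) = u y.\<close>
definition gwa_rels :: "('a, 'b) ring_scheme \<Rightarrow> ('a \<Rightarrow> 'a) \<Rightarrow> 'a \<Rightarrow> 'a fword set" where
  "gwa_rels A \<sigma> a =
     {letter (Inl u) | u. u \<notin> carrier A}
   \<union> {letter (Inl (u \<oplus>\<^bsub>A\<^esub> v)) - letter (Inl u) - letter (Inl v) | u v. u \<in> carrier A \<and> v \<in> carrier A}
   \<union> {letter (Inl (u \<otimes>\<^bsub>A\<^esub> v)) - fconv (letter (Inl u)) (letter (Inl v)) | u v. u \<in> carrier A \<and> v \<in> carrier A}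
   \<union> {letter (Inl \<one>\<^bsub>A\<^esub>) - Poly_Mapping.single [] 1}
   \<union> {fconv gy gx - letter (Inl a)}
   \<union> {fconv gx gy - letter (Inl (\<sigma> a))}
   \<union> {fconv gx (letter (Inl u)) - fconv (letter (Inl (\<sigma> u))) gx | u. u \<in> carrier A}
   \<union> {fconv gy (letter (Inl (\<sigma> u))) - fconv (letter (Inl u)) gy | u. u \<in> carrier A}"

definition gwa_ideal :: "('a, 'b) ring_scheme \<Rightarrow> ('a \<Rightarrow> 'a) \<Rightarrow> 'a \<Rightarrow> 'a fword set" where
  "gwa_ideal A \<sigma> a = genideal free_ring (gwa_rels A \<sigma> a)"

definition GWA :: "('a, 'b) ring_scheme \<Rightarrow> ('a \<Rightarrow> 'a) \<Rightarrow> 'a \<Rightarrow> 'a fword set ring" where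
  "GWA A \<sigma> a = free_ring Quot (gwa_ideal A \<sigma> a)"

definition gwa_incl :: "('a, 'b) ring_scheme \<Rightarrow> ('a \<Rightarrow> 'a) \<Rightarrow> 'a \<Rightarrow> 'a \<Rightarrow> 'a fword set" where
  "gwa_incl A \<sigma> a u = gwa_ideal A \<sigma> a +>\<^bsub>free_ring\<^esub> letter (Inl u)"

record ('m, 'r) rmodule =
  mcarrier :: "'m set"
  madd :: "'m \<Rightarrow> 'm \<Rightarrow> 'm"
  mzero :: 'm
  mact :: "'m \<Rightarrow> 'r \<Rightarrow> 'm"

definition right_module :: "('r, 'c) ring_scheme \<Rightarrow> ('m, 'r, 'd) rmodule_scheme \<Rightarrow> bool" where
  "right_module R M \<longleftrightarrow>
     mzero M \<in> mcarrier M
   \<and> (\<forall>m\<in>mcarrier M. \<forall>n\<in>mcarrier M. madd M m n \<in> mcarrier M)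
   \<and> (\<forall>m\<in>mcarrier M. \<forall>n\<in>mcarrier M. \<forall>k\<in>mcarrier M. madd M (madd M m n) k = madd M m (madd M n k))
   \<and> (\<forall>m\<in>mcarrier M. \<forall>n\<in>mcarrier M. madd M m n = madd M n m)
   \<and> (\<forall>m\<in>mcarrier M. madd M (mzero M) m = m)
   \<and> (\<forall>m\<in>mcarrier M. \<exists>n\<in>mcarrier M. madd M m n = mzero M)
   \<and> (\<forall>m\<in>mcarrier M. \<forall>r\<in>carrier R. mact M m r \<in> mcarrier M)
   \<and> (\<forall>m\<in>mcarrier M. \<forall>n\<in>mcarrier M. \<forall>r\<in>carrier R. mact M (madd M m n) r = madd M (mact M m r) (mact M n r))
   \<and> (\<forall>m\<in>mcarrier M. \<forall>r\<in>carrier R. \<forall>s\<in>carrier R. mact M m (r \<oplus>\<^bsub>R\<^esub> s) = madd M (mact M m r) (mact M m s))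
   \<and> (\<forall>m\<in>mcarrier M. \<forall>r\<in>carrier R. \<forall>s\<in>carrier R. mact M m (r \<otimes>\<^bsub>R\<^esub> s) = mact M (mact M m r) s)
   \<and> (\<forall>m\<in>mcarrier M. mact M m \<one>\<^bsub>R\<^esub> = m)"

definition rmodule_iso :: "('r, 'c) ring_scheme \<Rightarrow> ('m, 'r, 'd) rmodule_scheme \<Rightarrow> ('n, 'r, 'e) rmodule_scheme \<Rightarrow> bool" where
  "rmodule_iso R M N \<longleftrightarrow> (\<exists>f. bij_betw f (mcarrier M) (mcarrier N)
      \<and> (\<forall>m\<in>mcarrier M. \<forall>m'\<in>mcarrier M. f (madd M m m') = madd N (f m) (f m'))
      \<and> (\<forall>m\<in>mcarrier M. \<forall>r\<in>carrier R. f (mact M m r) = mact N (f m) r))"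

inductive_set gen_submodule :: "('r, 'c) ring_scheme \<Rightarrow> ('m, 'r, 'd) rmodule_scheme \<Rightarrow> 'm set \<Rightarrow> 'm set"
  for R :: "('r, 'c) ring_scheme" and M :: "('m, 'r, 'd) rmodule_scheme" and B :: "'m set" where
  base: "b \<in> B \<Longrightarrow> b \<in> gen_submodule R M B"
| zero: "mzero M \<in> gen_submodule R M B"
| add: "m \<in> gen_submodule R M B \<Longrightarrow> n \<in> gen_submodule R M B \<Longrightarrow> madd M m n \<in> gen_submodule R M B"
| act: "m \<in> gen_submodule R M B \<Longrightarrow> r \<in> carrier R \<Longrightarrow> mact M m r \<in> gen_submodule R M B"

definition mcoset :: "('m, 'r, 'd) rmodule_scheme \<Rightarrow> 'm \<Rightarrow> 'm set \<Rightarrow> 'm set" where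
  "mcoset M m N = {madd M m n | n. n \<in> N}"

definition quotient_module :: "('m, 'r, 'd) rmodule_scheme \<Rightarrow> 'm set \<Rightarrow> ('m set, 'r) rmodule" where
  "quotient_module M N = \<lparr>mcarrier = {mcoset M m N | m. m \<in> mcarrier M},
     madd = (\<lambda>C1 C2. {madd M x y | x y. x \<in> C1 \<and> y \<in> C2}),
     mzero = N,
     mact = (\<lambda>C1 r. {z. \<exists>x\<in>C1. z \<in> mcoset M (mact M x r) N})\<rparr>"

text \<open>Free abelian group on M x Q modulo the balanced-bilinearity relations;
  the result is a right Q-module (elements are cosets).\<close>
definition tgen :: "'m \<Rightarrow> 'q \<Rightarrow> ('m \<times> 'q) \<Rightarrow>\<^sub>0 int" where
  "tgen m q = Poly_Mapping.single (m, q) 1"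

definition tensor_gens :: "('r, 'c) ring_scheme \<Rightarrow> ('m, 'r, 'd) rmodule_scheme \<Rightarrow> ('q, 'e) ring_scheme
     \<Rightarrow> ('r \<Rightarrow> 'q) \<Rightarrow> (('m \<times> 'q) \<Rightarrow>\<^sub>0 int) set" where
  "tensor_gens R M Q \<phi> =
     {tgen (madd M m m') q - tgen m q - tgen m' q | m m' q. m \<in> mcarrier M \<and> m' \<in> mcarrier M \<and> q \<in> carrier Q}
   \<union> {tgen m (q \<oplus>\<^bsub>Q\<^esub> q') - tgen m q - tgen m q' | m q q'. m \<in> mcarrier M \<and> q \<in> carrier Q \<and> q' \<in> carrier Q}
   \<union> {tgen (mact M m r) q - tgen m (\<phi> r \<otimes>\<^bsub>Q\<^esub> q) | m r q. m \<in> mcarrier M \<and> r \<in> carrier R \<and> q \<in> carrier Q}"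

inductive_set tensor_rel :: "('r, 'c) ring_scheme \<Rightarrow> ('m, 'r, 'd) rmodule_scheme \<Rightarrow> ('q, 'e) ring_scheme
     \<Rightarrow> ('r \<Rightarrow> 'q) \<Rightarrow> (('m \<times> 'q) \<Rightarrow>\<^sub>0 int) set"
  for R M Q \<phi> where
  gen: "g \<in> tensor_gens R M Q \<phi> \<Longrightarrow> g \<in> tensor_rel R M Q \<phi>"
| zero: "0 \<in> tensor_rel R M Q \<phi>"
| add: "f \<in> tensor_rel R M Q \<phi> \<Longrightarrow> g \<in> tensor_rel R M Q \<phi> \<Longrightarrow> f + g \<in> tensor_rel R M Q \<phi>"
| neg: "f \<in> tensor_rel R M Q \<phi> \<Longrightarrow> - f \<in> tensor_rel R M Q \<phi>"

definition tclass :: "('r, 'c) ring_scheme \<Rightarrow> ('m, 'r, 'd) rmodule_scheme \<Rightarrow> ('q, 'e) ring_scheme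
     \<Rightarrow> ('r \<Rightarrow> 'q) \<Rightarrow> (('m \<times> 'q) \<Rightarrow>\<^sub>0 int) \<Rightarrow> (('m \<times> 'q) \<Rightarrow>\<^sub>0 int) set" where
  "tclass R M Q \<phi> f = {f + g | g. g \<in> tensor_rel R M Q \<phi>}"

definition tact_rep :: "('q, 'e) ring_scheme \<Rightarrow> (('m \<times> 'q) \<Rightarrow>\<^sub>0 int) \<Rightarrow> 'q \<Rightarrow> (('m \<times> 'q) \<Rightarrow>\<^sub>0 int)" where
  "tact_rep Q f q = (\<Sum>p\<in>Poly_Mapping.keys f. Poly_Mapping.single (fst p, snd p \<otimes>\<^bsub>Q\<^esub> q) (Poly_Mapping.lookup f p))"

definition tensor :: "('r, 'c) ring_scheme \<Rightarrow> ('m, 'r, 'd) rmodule_scheme \<Rightarrow> ('q, 'e) ring_scheme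
     \<Rightarrow> ('r \<Rightarrow> 'q) \<Rightarrow> ((('m \<times> 'q) \<Rightarrow>\<^sub>0 int) set, 'q) rmodule" where
  "tensor R M Q \<phi> = \<lparr>
     mcarrier = {tclass R M Q \<phi> f | f. Poly_Mapping.keys f \<subseteq> mcarrier M \<times> carrier Q},
     madd = (\<lambda>C1 C2. {f + g | f g. f \<in> C1 \<and> g \<in> C2}),
     mzero = tensor_rel R M Q \<phi>,
     mact = (\<lambda>C1 q. {h. \<exists>f\<in>C1. h \<in> tclass R M Q \<phi> (tact_rep Q f q)})\<rparr>"

definition right_ring_of_fractions :: "('r, 'c) ring_scheme \<Rightarrow> 'r set \<Rightarrow> ('q, 'e) ring_scheme \<Rightarrow> ('r \<Rightarrow> 'q) \<Rightarrow> bool" where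
  "right_ring_of_fractions R T Q \<phi> \<longleftrightarrow>
     ring Q \<and> \<phi> \<in> ring_hom R Q
   \<and> (\<forall>t\<in>T. \<phi> t \<in> Units Q)
   \<and> (\<forall>q\<in>carrier Q. \<exists>r\<in>carrier R. \<exists>t\<in>T. q = \<phi> r \<otimes>\<^bsub>Q\<^esub> inv\<^bsub>Q\<^esub> (\<phi> t))
   \<and> (\<forall>r\<in>carrier R. \<phi> r = \<zero>\<^bsub>Q\<^esub> \<longleftrightarrow> (\<exists>t\<in>T. r \<otimes>\<^bsub>R\<^esub> t = \<zero>\<^bsub>R\<^esub>))"

primrec cprod :: "('a, 'b) ring_scheme \<Rightarrow> ('a \<Rightarrow> 'a) \<Rightarrow> 'a \<Rightarrow> nat \<Rightarrow> 'a" where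
  "cprod A \<sigma> a 0 = a"
| "cprod A \<sigma> a (Suc l) = cprod A \<sigma> a l \<otimes>\<^bsub>A\<^esub> sigma_pow A \<sigma> (- int (Suc l)) a"

definition Vlev :: "('a, 'b) ring_scheme \<Rightarrow> ('a \<Rightarrow> 'a) \<Rightarrow> 'a \<Rightarrow> ('m, 'a fword set, 'd) rmodule_scheme \<Rightarrow> nat \<Rightarrow> 'm set" where
  "Vlev A \<sigma> a V l = {v \<in> mcarrier V. mact V v (gwa_incl A \<sigma> a (cprod A \<sigma> a l)) = mzero V}"

definition Vinf :: "('a, 'b) ring_scheme \<Rightarrow> ('a \<Rightarrow> 'a) \<Rightarrow> 'a \<Rightarrow> ('m, 'a fword set, 'd) rmodule_scheme \<Rightarrow> 'm set" where
  "Vinf A \<sigma> a V = (\<Union>l. Vlev A \<sigma> a V l)"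

definition height :: "('a, 'b) ring_scheme \<Rightarrow> ('a \<Rightarrow> 'a) \<Rightarrow> 'a \<Rightarrow> ('m, 'a fword set, 'd) rmodule_scheme \<Rightarrow> enat" where
  "height A \<sigma> a V = (if \<exists>l. Vlev A \<sigma> a V l = Vinf A \<sigma> a V
      then enat (LEAST l. Vlev A \<sigma> a V l = Vinf A \<sigma> a V) else \<infinity>)"

definition Vlev_e :: "('a, 'b) ring_scheme \<Rightarrow> ('a \<Rightarrow> 'a) \<Rightarrow> 'a \<Rightarrow> ('m, 'a fword set, 'd) rmodule_scheme \<Rightarrow> enat \<Rightarrow> 'm set" where
  "Vlev_e A \<sigma> a V h = (case h of enat l \<Rightarrow> Vlev A \<sigma> a V l | \<infinity> \<Rightarrow> Vinf A \<sigma> a V)"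

end

theory Submission
  imports Defs
begin

(* Every v in V^[l] is annihilated by c = a \<sigma>\<^sup>-\<^sup>1(a) \<cdots> \<sigma>\<^sup>-\<^sup>l(a), a product of elements of S,
   and \<phi> c is a unit of the localization Q. Hence v \<otimes> q = v \<otimes> \<phi> c (\<phi> c)\<inverse> q = v c \<otimes> (\<phi> c)\<inverse> q = 0,
   so all pure tensors with first factor in the submodule N generated by V^[h] vanish.
   For any such N the projection V \<rightarrow> V/N induces V \<otimes> Q \<cong> (V/N) \<otimes> Q: an inverse is induced
   by an arbitrary choice of representatives, which is linear modulo pure tensors n \<otimes> q with
   n in N. *)

definition map_left :: "('m \<Rightarrow> 'n) \<Rightarrow> (('m \<times> 'q) \<Rightarrow>\<^sub>0 int) \<Rightarrow> (('n \<times> 'q) \<Rightarrow>\<^sub>0 int)" where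
  "map_left k f = frag_extend (\<lambda>p. frag_of (k (fst p), snd p)) f"

lemma tgen_eq_frag_of: "tgen m q = frag_of (m, q)"
  by (simp add: tgen_def)

lemma frag_extend_frag_extend_frag_of:
  "frag_extend h (frag_extend (\<lambda>p. frag_of (g p)) c) = frag_extend (\<lambda>p. h (g p)) c"
  using frag_extend_compose[of h g c] by (simp add: o_def)

lemma frag_extend_diff_fun: "frag_extend (\<lambda>x. b x - c x) d = frag_extend b d - frag_extend c d"
  using subset_UNIV by (induction d rule: frag_induction) (auto simp: frag_extend_diff)

lemma map_left_add: "map_left k (f + g) = map_left k f + map_left k g"
  by (simp add: map_left_def frag_extend_add)

lemma map_left_diff: "map_left k (f - g) = map_left k f - map_left k g"
  by (simp add: map_left_def frag_extend_diff)

lemma map_left_tgen: "map_left k (tgen m q) = tgen (k m) q"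
  by (simp add: map_left_def tgen_eq_frag_of)

lemma map_left_compose: "map_left k (map_left k' f) = map_left (k \<circ> k') f"
  by (simp add: map_left_def frag_extend_frag_extend_frag_of)

lemma map_left_id_on:
  assumes "Poly_Mapping.keys f \<subseteq> S \<times> T" and "\<And>x. x \<in> S \<Longrightarrow> k x = x"
  shows "map_left k f = f"
proof -
  have "map_left k f = frag_extend frag_of f"
    unfolding map_left_def by (rule frag_extend_eq) (use assms in auto)
  then show ?thesis by (metis frag_expansion)
qed

lemma keys_map_left:
  assumes "Poly_Mapping.keys f \<subseteq> S \<times> T" and "k ` S \<subseteq> S'"
  shows "Poly_Mapping.keys (map_left k f) \<subseteq> S' \<times> T"
  using keys_frag_extend[of "\<lambda>p. frag_of (k (fst p), snd p)" f] assms
  by (fastforce simp: map_left_def keys_frag_of)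

lemma tact_rep_eq_frag_extend:
  "tact_rep Q f q = frag_extend (\<lambda>p. frag_of (fst p, snd p \<otimes>\<^bsub>Q\<^esub> q)) f"
proof -
  have "frag_cmul c (frag_of x) = Poly_Mapping.single x c" for c and x :: "'a \<times> 'b"
    by (rule poly_mapping_eqI) (simp add: lookup_single when_def)
  then show ?thesis unfolding tact_rep_def frag_extend_def by simp
qed

lemma tact_rep_add: "tact_rep Q (f + g) q = tact_rep Q f q + tact_rep Q g q"
  by (simp add: tact_rep_eq_frag_extend frag_extend_add)

lemma tact_rep_diff: "tact_rep Q (f - g) q = tact_rep Q f q - tact_rep Q g q"
  by (simp add: tact_rep_eq_frag_extend frag_extend_diff)

lemma tact_rep_tgen: "tact_rep Q (tgen m q0) q = tgen m (q0 \<otimes>\<^bsub>Q\<^esub> q)"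
  by (simp add: tact_rep_eq_frag_extend tgen_eq_frag_of)

lemma map_left_tact_rep: "map_left k (tact_rep Q f q) = tact_rep Q (map_left k f) q"
  by (simp add: map_left_def tact_rep_eq_frag_extend frag_extend_frag_extend_frag_of)

lemma tensor_rel_diff:
  "f \<in> tensor_rel R M Q \<phi> \<Longrightarrow> g \<in> tensor_rel R M Q \<phi> \<Longrightarrow> f - g \<in> tensor_rel R M Q \<phi>"
  by (metis tensor_rel.add tensor_rel.neg diff_conv_add_uminus)

lemma frag_extend_in_tensor_rel:
  assumes "\<And>x. x \<in> Poly_Mapping.keys c \<Longrightarrow> b x \<in> tensor_rel R M Q \<phi>"
  shows "frag_extend b c \<in> tensor_rel R M Q \<phi>"
  using order_refl[of "Poly_Mapping.keys c"]
proof (induction c rule: frag_induction)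
  case zero then show ?case by (simp add: tensor_rel.zero)
next
  case (one x) then show ?case using assms by simp
next
  case (diff a b) then show ?case by (simp add: frag_extend_diff tensor_rel_diff)
qed

lemma tensor_rel_additive_image:
  assumes additive: "\<And>f g. K (f + g) = K f + K g"
    and gens: "\<And>g. g \<in> tensor_gens R M Q \<phi> \<Longrightarrow> K g \<in> tensor_rel R' M' Q' \<phi>'"
    and "r \<in> tensor_rel R M Q \<phi>"
  shows "K r \<in> tensor_rel R' M' Q' \<phi>'"
proof -
  have K0: "K 0 = 0" using additive[of 0 0] by simp
  from \<open>r \<in> _\<close> show ?thesis
  proof (induction r rule: tensor_rel.induct)
    case (gen g) then show ?case using gens by blast
  next
    case zero then show ?case by (simp add: K0 tensor_rel.zero)
  next
    case (add f g) then show ?case by (simp add: additive tensor_rel.add)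
  next
    case (neg f)
    have "K f + K (- f) = 0" using additive[of f "- f"] K0 by simp
    then have "K (- f) = - K f" by (metis add.commute eq_neg_iff_add_eq_0)
    then show ?case using neg.IH by (simp add: tensor_rel.neg)
  qed
qed

lemma tgen_madd_in_tensor_rel:
  "m \<in> mcarrier M \<Longrightarrow> m' \<in> mcarrier M \<Longrightarrow> q \<in> carrier Q \<Longrightarrow>
   tgen (madd M m m') q - tgen m q - tgen m' q \<in> tensor_rel R M Q \<phi>"
  by (rule tensor_rel.gen) (unfold tensor_gens_def, blast)

lemma tgen_qadd_in_tensor_rel:
  "m \<in> mcarrier M \<Longrightarrow> q \<in> carrier Q \<Longrightarrow> q' \<in> carrier Q \<Longrightarrow>
   tgen m (q \<oplus>\<^bsub>Q\<^esub> q') - tgen m q - tgen m q' \<in> tensor_rel R M Q \<phi>"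
  by (rule tensor_rel.gen) (unfold tensor_gens_def, blast)

lemma tgen_mact_in_tensor_rel:
  "m \<in> mcarrier M \<Longrightarrow> r \<in> carrier R \<Longrightarrow> q \<in> carrier Q \<Longrightarrow>
   tgen (mact M m r) q - tgen m (\<phi> r \<otimes>\<^bsub>Q\<^esub> q) \<in> tensor_rel R M Q \<phi>"
  by (rule tensor_rel.gen) (unfold tensor_gens_def, blast)

lemma tact_rep_in_tensor_rel:
  assumes "ring Q" and \<phi>: "\<phi> \<in> carrier R \<rightarrow> carrier Q" and q: "q \<in> carrier Q"
    and "r \<in> tensor_rel R M Q \<phi>"
  shows "tact_rep Q r q \<in> tensor_rel R M Q \<phi>"
proof (rule tensor_rel_additive_image[where K = "\<lambda>f. tact_rep Q f q", OF tact_rep_add _ assms(4)])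
  interpret ring Q by fact
  fix g assume "g \<in> tensor_gens R M Q \<phi>"
  then show "tact_rep Q g q \<in> tensor_rel R M Q \<phi>"
    unfolding tensor_gens_def
  proof (elim UnE CollectE exE conjE)
    fix m m' q0 assume "g = tgen (madd M m m') q0 - tgen m q0 - tgen m' q0"
      "m \<in> mcarrier M" "m' \<in> mcarrier M" "q0 \<in> carrier Q"
    then show ?thesis using q by (simp add: tact_rep_diff tact_rep_tgen tgen_madd_in_tensor_rel)
  next
    fix m q0 q1 assume "g = tgen m (q0 \<oplus>\<^bsub>Q\<^esub> q1) - tgen m q0 - tgen m q1"
      "m \<in> mcarrier M" "q0 \<in> carrier Q" "q1 \<in> carrier Q"
    then show ?thesis using q by (simp add: tact_rep_diff tact_rep_tgen l_distr tgen_qadd_in_tensor_rel)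
  next
    fix m r q0 assume "g = tgen (mact M m r) q0 - tgen m (\<phi> r \<otimes>\<^bsub>Q\<^esub> q0)"
      "m \<in> mcarrier M" "r \<in> carrier R" "q0 \<in> carrier Q"
    moreover have "\<phi> r \<in> carrier Q" using \<phi> \<open>r \<in> carrier R\<close> by blast
    ultimately show ?thesis using q by (simp add: tact_rep_diff tact_rep_tgen m_assoc tgen_mact_in_tensor_rel)
  qed
qed

lemma map_left_in_tensor_rel:
  assumes k: "k \<in> mcarrier M \<rightarrow> mcarrier M'"
    and k_madd: "\<And>m m' q. m \<in> mcarrier M \<Longrightarrow> m' \<in> mcarrier M \<Longrightarrow> q \<in> carrier Q \<Longrightarrow>
        tgen (k (madd M m m')) q - tgen (madd M' (k m) (k m')) q \<in> tensor_rel R M' Q \<phi>"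
    and k_mact: "\<And>m r q. m \<in> mcarrier M \<Longrightarrow> r \<in> carrier R \<Longrightarrow> q \<in> carrier Q \<Longrightarrow>
        tgen (k (mact M m r)) q - tgen (mact M' (k m) r) q \<in> tensor_rel R M' Q \<phi>"
    and "f \<in> tensor_rel R M Q \<phi>"
  shows "map_left k f \<in> tensor_rel R M' Q \<phi>"
proof (rule tensor_rel_additive_image[where K = "map_left k", OF map_left_add _ assms(4)])
  fix g assume "g \<in> tensor_gens R M Q \<phi>"
  then show "map_left k g \<in> tensor_rel R M' Q \<phi>"
    unfolding tensor_gens_def
  proof (elim UnE CollectE exE conjE)
    fix m m' q assume g: "g = tgen (madd M m m') q - tgen m q - tgen m' q"
      and m: "m \<in> mcarrier M" "m' \<in> mcarrier M" and q: "q \<in> carrier Q"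
    have "map_left k g = (tgen (k (madd M m m')) q - tgen (madd M' (k m) (k m')) q)
        + (tgen (madd M' (k m) (k m')) q - tgen (k m) q - tgen (k m') q)"
      by (simp add: g map_left_diff map_left_tgen)
    also have "\<dots> \<in> tensor_rel R M' Q \<phi>"
      using k m q by (intro tensor_rel.add k_madd tgen_madd_in_tensor_rel) auto
    finally show ?thesis .
  next
    fix m q q' assume "g = tgen m (q \<oplus>\<^bsub>Q\<^esub> q') - tgen m q - tgen m q'"
      "m \<in> mcarrier M" "q \<in> carrier Q" "q' \<in> carrier Q"
    then show ?thesis using k by (auto simp: map_left_diff map_left_tgen intro: tgen_qadd_in_tensor_rel)
  next
    fix m r q assume g: "g = tgen (mact M m r) q - tgen m (\<phi> r \<otimes>\<^bsub>Q\<^esub> q)"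
      and m: "m \<in> mcarrier M" and r: "r \<in> carrier R" and q: "q \<in> carrier Q"
    have "map_left k g = (tgen (k (mact M m r)) q - tgen (mact M' (k m) r) q)
        + (tgen (mact M' (k m) r) q - tgen (k m) (\<phi> r \<otimes>\<^bsub>Q\<^esub> q))"
      by (simp add: g map_left_diff map_left_tgen)
    also have "\<dots> \<in> tensor_rel R M' Q \<phi>"
      using k m r q by (intro tensor_rel.add k_mact tgen_mact_in_tensor_rel) auto
    finally show ?thesis .
  qed
qed

lemma tclass_self: "f \<in> tclass R M Q \<phi> f"
  unfolding tclass_def using tensor_rel.zero by force

lemma tclass_eq_iff: "tclass R M Q \<phi> f = tclass R M Q \<phi> g \<longleftrightarrow> f - g \<in> tensor_rel R M Q \<phi>"
proof
  assume "tclass R M Q \<phi> f = tclass R M Q \<phi> g"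
  then have "f \<in> tclass R M Q \<phi> g" by (metis tclass_self)
  then obtain r where "f = g + r" "r \<in> tensor_rel R M Q \<phi>" unfolding tclass_def by auto
  then show "f - g \<in> tensor_rel R M Q \<phi>" by simp
next
  have shift: "tclass R M Q \<phi> f \<subseteq> tclass R M Q \<phi> g" if "f - g \<in> tensor_rel R M Q \<phi>" for f g
  proof
    fix x assume "x \<in> tclass R M Q \<phi> f"
    then obtain r where "x = g + ((f - g) + r)" "r \<in> tensor_rel R M Q \<phi>" unfolding tclass_def by auto
    then show "x \<in> tclass R M Q \<phi> g" unfolding tclass_def using that by (blast intro: tensor_rel.add)
  qed
  assume "f - g \<in> tensor_rel R M Q \<phi>"
  moreover then have "g - f \<in> tensor_rel R M Q \<phi>" using tensor_rel.neg by fastforce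
  ultimately show "tclass R M Q \<phi> f = tclass R M Q \<phi> g" using shift by blast
qed

lemma tensor_mcarrier:
  "mcarrier (tensor R M Q \<phi>) = {tclass R M Q \<phi> f | f. Poly_Mapping.keys f \<subseteq> mcarrier M \<times> carrier Q}"
  unfolding tensor_def by simp

lemma tensor_madd_tclass:
  "madd (tensor R M Q \<phi>) (tclass R M Q \<phi> f) (tclass R M Q \<phi> g) = tclass R M Q \<phi> (f + g)"
proof -
  have "{x + y |x y. x \<in> tclass R M Q \<phi> f \<and> y \<in> tclass R M Q \<phi> g} = tclass R M Q \<phi> (f + g)"
  proof (intro Set.set_eqI iffI)
    fix z assume "z \<in> {x + y |x y. x \<in> tclass R M Q \<phi> f \<and> y \<in> tclass R M Q \<phi> g}"
    then obtain r s where "z = (f + g) + (r + s)" "r \<in> tensor_rel R M Q \<phi>" "s \<in> tensor_rel R M Q \<phi>"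
      unfolding tclass_def by (auto simp: algebra_simps)
    then show "z \<in> tclass R M Q \<phi> (f + g)" unfolding tclass_def by (blast intro: tensor_rel.add)
  next
    fix z assume "z \<in> tclass R M Q \<phi> (f + g)"
    then obtain r where "z = (f + r) + g" "r \<in> tensor_rel R M Q \<phi>"
      unfolding tclass_def by (auto simp: algebra_simps)
    then show "z \<in> {x + y |x y. x \<in> tclass R M Q \<phi> f \<and> y \<in> tclass R M Q \<phi> g}"
      using tclass_self[of g] unfolding tclass_def by blast
  qed
  then show ?thesis unfolding tensor_def by simp
qed

definition tclass_image ::
    "('r, 'c) ring_scheme \<Rightarrow> ('n, 'r, 'd) rmodule_scheme \<Rightarrow> ('q, 'e) ring_scheme \<Rightarrow> ('r \<Rightarrow> 'q)
     \<Rightarrow> ((('m \<times> 'q) \<Rightarrow>\<^sub>0 int) \<Rightarrow> (('n \<times> 'q) \<Rightarrow>\<^sub>0 int)) \<Rightarrow> (('m \<times> 'q) \<Rightarrow>\<^sub>0 int) set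
     \<Rightarrow> (('n \<times> 'q) \<Rightarrow>\<^sub>0 int) set" where
  "tclass_image R M' Q \<phi> K C = {h. \<exists>f\<in>C. h \<in> tclass R M' Q \<phi> (K f)}"

lemma tclass_image_tclass:
  assumes "\<And>r. r \<in> tensor_rel R M Q \<phi> \<Longrightarrow> K r \<in> tensor_rel R M' Q \<phi>"
    and "\<And>f g. K (f + g) = K f + K g"
  shows "tclass_image R M' Q \<phi> K (tclass R M Q \<phi> f0) = tclass R M' Q \<phi> (K f0)"
proof -
  have "tclass R M' Q \<phi> (K f) = tclass R M' Q \<phi> (K f0)" if f: "f \<in> tclass R M Q \<phi> f0" for f
  proof -
    obtain r where "f = f0 + r" "r \<in> tensor_rel R M Q \<phi>" using f unfolding tclass_def by blast
    then show ?thesis using assms by (simp add: tclass_eq_iff)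
  qed
  then show ?thesis unfolding tclass_image_def using tclass_self[of f0] by blast
qed

lemma tensor_mact_tclass:
  assumes "ring Q" "\<phi> \<in> carrier R \<rightarrow> carrier Q" "q \<in> carrier Q"
  shows "mact (tensor R M Q \<phi>) (tclass R M Q \<phi> f) q = tclass R M Q \<phi> (tact_rep Q f q)"
  using tclass_image_tclass[of R M Q \<phi> "\<lambda>f. tact_rep Q f q" M f]
  by (simp add: tensor_def tclass_image_def tact_rep_in_tensor_rel[OF assms] tact_rep_add)

context
  fixes R :: "('r, 'c) ring_scheme" and V :: "('m, 'r, 'd) rmodule_scheme"
  assumes V: "right_module R V"
begin

lemma rmodule_mzero_closed: "mzero V \<in> mcarrier V"
  using V unfolding right_module_def by auto

lemma rmodule_madd_closed: "m \<in> mcarrier V \<Longrightarrow> n \<in> mcarrier V \<Longrightarrow> madd V m n \<in> mcarrier V"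
  using V unfolding right_module_def by auto

lemma rmodule_mact_closed: "m \<in> mcarrier V \<Longrightarrow> r \<in> carrier R \<Longrightarrow> mact V m r \<in> mcarrier V"
  using V unfolding right_module_def by auto

lemma rmodule_madd_assoc: "m \<in> mcarrier V \<Longrightarrow> n \<in> mcarrier V \<Longrightarrow> k \<in> mcarrier V \<Longrightarrow>
    madd V (madd V m n) k = madd V m (madd V n k)"
  using V unfolding right_module_def by auto

lemma rmodule_madd_comm: "m \<in> mcarrier V \<Longrightarrow> n \<in> mcarrier V \<Longrightarrow> madd V m n = madd V n m"
  using V unfolding right_module_def by auto

lemma rmodule_madd_left_commute: "m \<in> mcarrier V \<Longrightarrow> n \<in> mcarrier V \<Longrightarrow> k \<in> mcarrier V \<Longrightarrow>
    madd V m (madd V n k) = madd V n (madd V m k)"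
  by (metis rmodule_madd_assoc rmodule_madd_comm)

lemma rmodule_mzero_left: "m \<in> mcarrier V \<Longrightarrow> madd V (mzero V) m = m"
  using V unfolding right_module_def by auto

lemma rmodule_mzero_right: "m \<in> mcarrier V \<Longrightarrow> madd V m (mzero V) = m"
  using rmodule_mzero_left rmodule_madd_comm rmodule_mzero_closed by metis

lemma rmodule_mact_madd_distrib: "m \<in> mcarrier V \<Longrightarrow> n \<in> mcarrier V \<Longrightarrow> r \<in> carrier R \<Longrightarrow>
    mact V (madd V m n) r = madd V (mact V m r) (mact V n r)"
  using V unfolding right_module_def by auto

lemma gen_submodule_subset:
  assumes "B \<subseteq> mcarrier V" shows "gen_submodule R V B \<subseteq> mcarrier V"
proof
  fix n assume "n \<in> gen_submodule R V B"
  then show "n \<in> mcarrier V"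
    by (induction n rule: gen_submodule.induct)
       (use assms in \<open>auto simp: rmodule_mzero_closed rmodule_madd_closed rmodule_mact_closed\<close>)
qed

lemma tgen_mzero_in_tensor_rel:
  assumes "q \<in> carrier Q"
  shows "tgen (mzero V) q \<in> tensor_rel R V Q \<phi>"
proof -
  have "- (tgen (madd V (mzero V) (mzero V)) q - tgen (mzero V) q - tgen (mzero V) q) \<in> tensor_rel R V Q \<phi>"
    using assms by (intro tensor_rel.neg tgen_madd_in_tensor_rel rmodule_mzero_closed)
  then show ?thesis by (simp add: rmodule_mzero_left rmodule_mzero_closed)
qed

lemma tgen_annihilated_in_tensor_rel:
  assumes "ring Q" and m: "m \<in> mcarrier V" and c: "c \<in> carrier R" and "mact V m c = mzero V"
    and unit: "\<phi> c \<in> Units Q" and q: "q \<in> carrier Q"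
  shows "tgen m q \<in> tensor_rel R V Q \<phi>"
proof -
  interpret Q: ring Q by fact
  define q' where "q' = inv\<^bsub>Q\<^esub> (\<phi> c) \<otimes>\<^bsub>Q\<^esub> q"
  have q': "q' \<in> carrier Q" unfolding q'_def using unit q by auto
  have "\<phi> c \<otimes>\<^bsub>Q\<^esub> q' = q"
    unfolding q'_def using unit q by (simp add: Q.m_assoc[symmetric] Q.Units_closed)
  then have "tgen (mzero V) q' - tgen m q \<in> tensor_rel R V Q \<phi>"
    using tgen_mact_in_tensor_rel[OF m c q', where \<phi> = \<phi>] \<open>mact V m c = mzero V\<close> by simp
  with tgen_mzero_in_tensor_rel[OF q']
  have "tgen (mzero V) q' - (tgen (mzero V) q' - tgen m q) \<in> tensor_rel R V Q \<phi>"
    by (rule tensor_rel_diff)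
  then show ?thesis by simp
qed

lemma gen_submodule_tgen_in_tensor_rel:
  assumes B: "B \<subseteq> mcarrier V" and \<phi>: "\<phi> \<in> carrier R \<rightarrow> carrier Q" and "ring Q"
    and gens: "\<And>b q. b \<in> B \<Longrightarrow> q \<in> carrier Q \<Longrightarrow> tgen b q \<in> tensor_rel R V Q \<phi>"
    and "n \<in> gen_submodule R V B" and "q \<in> carrier Q"
  shows "tgen n q \<in> tensor_rel R V Q \<phi>"
  using \<open>n \<in> _\<close> \<open>q \<in> _\<close>
proof (induction n arbitrary: q rule: gen_submodule.induct)
  case (base b) then show ?case by (rule gens)
next
  case zero then show ?case by (rule tgen_mzero_in_tensor_rel)
next
  case (add m n)
  have "m \<in> mcarrier V" "n \<in> mcarrier V" using add.hyps gen_submodule_subset[OF B] by auto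
  then have "(tgen (madd V m n) q - tgen m q - tgen n q) + (tgen m q + tgen n q) \<in> tensor_rel R V Q \<phi>"
    using add.IH add.prems by (intro tensor_rel.add tgen_madd_in_tensor_rel)
  then show ?case by simp
next
  case (act m r)
  have "m \<in> mcarrier V" using act.hyps gen_submodule_subset[OF B] by auto
  moreover have "\<phi> r \<otimes>\<^bsub>Q\<^esub> q \<in> carrier Q"
    using monoid.m_closed[OF ring.is_monoid[OF \<open>ring Q\<close>] funcset_mem[OF \<phi> act.hyps(2)] act.prems] .
  ultimately have "(tgen (mact V m r) q - tgen m (\<phi> r \<otimes>\<^bsub>Q\<^esub> q)) + tgen m (\<phi> r \<otimes>\<^bsub>Q\<^esub> q) \<in> tensor_rel R V Q \<phi>"
    using act.IH act.hyps act.prems by (intro tensor_rel.add tgen_mact_in_tensor_rel)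
  then show ?case by simp
qed

end

subsection \<open>Tensoring away a submodule whose pure tensors vanish\<close>

locale tensor_vanishing_submodule =
  fixes R :: "('r, 'c) ring_scheme" and V :: "('m, 'r, 'd) rmodule_scheme"
    and Q :: "('q, 'e) ring_scheme" and \<phi> :: "'r \<Rightarrow> 'q" and N :: "'m set"
  assumes module: "right_module R V" and ring_Q: "ring Q" and \<phi>_closed: "\<phi> \<in> carrier R \<rightarrow> carrier Q"
    and N_subset: "N \<subseteq> mcarrier V" and N_mzero: "mzero V \<in> N"
    and N_madd: "\<And>m n. m \<in> N \<Longrightarrow> n \<in> N \<Longrightarrow> madd V m n \<in> N"
    and N_mact: "\<And>m r. m \<in> N \<Longrightarrow> r \<in> carrier R \<Longrightarrow> mact V m r \<in> N"
    and N_tgen: "\<And>n q. n \<in> N \<Longrightarrow> q \<in> carrier Q \<Longrightarrow> tgen n q \<in> tensor_rel R V Q \<phi>"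
begin

abbreviation quot where "quot \<equiv> quotient_module V N"
abbreviation proj where "proj m \<equiv> mcoset V m N"

definition rep where "rep C = (SOME m. m \<in> mcarrier V \<and> C = proj m)"

lemmas module_facts = rmodule_mzero_closed[OF module] rmodule_madd_closed[OF module]
  rmodule_mact_closed[OF module] rmodule_madd_assoc[OF module] rmodule_madd_comm[OF module]
  rmodule_madd_left_commute[OF module] rmodule_mzero_right[OF module]
  rmodule_mact_madd_distrib[OF module]

lemma N_closed: "n \<in> N \<Longrightarrow> n \<in> mcarrier V"
  using N_subset by blast

lemma mem_proj: "m \<in> mcarrier V \<Longrightarrow> m \<in> proj m"
  unfolding mcoset_def using N_mzero rmodule_mzero_right[OF module, of m, symmetric] by blast

lemma quot_mcarrier: "mcarrier quot = proj ` mcarrier V"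
  unfolding quotient_module_def by auto

lemma proj_madd:
  assumes "m \<in> mcarrier V" "m' \<in> mcarrier V"
  shows "madd quot (proj m) (proj m') = proj (madd V m m')"
proof -
  have "{madd V x y |x y. x \<in> proj m \<and> y \<in> proj m'} = proj (madd V m m')"
  proof (intro Set.set_eqI iffI)
    fix z assume "z \<in> {madd V x y |x y. x \<in> proj m \<and> y \<in> proj m'}"
    then obtain n n' where n: "n \<in> N" "n' \<in> N" and "z = madd V (madd V m n) (madd V m' n')"
      unfolding mcoset_def by blast
    then have "z = madd V (madd V m m') (madd V n n')"
      using assms N_closed[OF n(1)] N_closed[OF n(2)] by (simp add: module_facts)
    then show "z \<in> proj (madd V m m')" unfolding mcoset_def using N_madd n by blast
  next
    fix z assume "z \<in> proj (madd V m m')"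
    then obtain n where n: "n \<in> N" and "z = madd V (madd V m m') n" unfolding mcoset_def by blast
    then have "z = madd V (madd V m n) (madd V m' (mzero V))"
      using assms N_closed[OF n] by (simp add: module_facts)
    then show "z \<in> {madd V x y |x y. x \<in> proj m \<and> y \<in> proj m'}"
      unfolding mcoset_def using n N_mzero by blast
  qed
  then show ?thesis unfolding quotient_module_def by simp
qed

lemma proj_mact:
  assumes "m \<in> mcarrier V" "r \<in> carrier R"
  shows "mact quot (proj m) r = proj (mact V m r)"
proof -
  have "{z. \<exists>x\<in>proj m. z \<in> proj (mact V x r)} = proj (mact V m r)"
  proof (intro Set.set_eqI iffI)
    fix z assume "z \<in> {z. \<exists>x\<in>proj m. z \<in> proj (mact V x r)}"
    then obtain n n' where n: "n \<in> N" "n' \<in> N" and "z = madd V (mact V (madd V m n) r) n'"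
      unfolding mcoset_def by blast
    then have "z = madd V (mact V m r) (madd V (mact V n r) n')"
      using assms N_closed[OF n(1)] N_closed[OF n(2)] by (simp add: module_facts)
    then show "z \<in> proj (mact V m r)" unfolding mcoset_def using N_madd N_mact n assms by blast
  qed (use mem_proj assms in blast)
  then show ?thesis unfolding quotient_module_def by simp
qed

lemma
  assumes "C \<in> mcarrier quot"
  shows rep_closed: "rep C \<in> mcarrier V" and proj_rep: "proj (rep C) = C"
proof -
  have "\<exists>m. m \<in> mcarrier V \<and> C = proj m" using assms quot_mcarrier by blast
  then have "rep C \<in> mcarrier V \<and> C = proj (rep C)" unfolding rep_def by (rule someI_ex)
  then show "rep C \<in> mcarrier V" "proj (rep C) = C" by auto
qed

lemma tgen_proj_eq_in_tensor_rel:
  assumes "m \<in> mcarrier V" "m' \<in> mcarrier V" "proj m = proj m'" "q \<in> carrier Q"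
  shows "tgen m q - tgen m' q \<in> tensor_rel R V Q \<phi>"
proof -
  obtain n where n: "n \<in> N" and "m = madd V m' n"
    using mem_proj[OF assms(1)] assms(3) unfolding mcoset_def by blast
  then have "tgen m q - tgen m' q = (tgen (madd V m' n) q - tgen m' q - tgen n q) + tgen n q"
    by simp
  also have "\<dots> \<in> tensor_rel R V Q \<phi>"
    using assms N_closed[OF n] N_tgen[OF n] by (intro tensor_rel.add tgen_madd_in_tensor_rel)
  finally show ?thesis .
qed

lemma tgen_rep_proj_in_tensor_rel:
  assumes "m \<in> mcarrier V" "q \<in> carrier Q"
  shows "tgen (rep (proj m)) q - tgen m q \<in> tensor_rel R V Q \<phi>"
proof -
  have "proj m \<in> mcarrier quot" using assms quot_mcarrier by blast
  then show ?thesis using assms by (intro tgen_proj_eq_in_tensor_rel) (simp_all add: rep_closed proj_rep)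
qed

lemma map_left_proj_in_tensor_rel:
  "f \<in> tensor_rel R V Q \<phi> \<Longrightarrow> map_left proj f \<in> tensor_rel R quot Q \<phi>"
proof (rule map_left_in_tensor_rel)
  show "proj \<in> mcarrier V \<rightarrow> mcarrier quot" using quot_mcarrier by blast
qed (simp_all add: proj_madd proj_mact tensor_rel.zero)

text \<open>The choice of representatives is not linear, but it is linear modulo the relations,
  because pure tensors with first factor in \<open>N\<close> vanish.\<close>
lemma map_left_rep_in_tensor_rel:
  "f \<in> tensor_rel R quot Q \<phi> \<Longrightarrow> map_left rep f \<in> tensor_rel R V Q \<phi>"
proof (rule map_left_in_tensor_rel)
  show "rep \<in> mcarrier quot \<rightarrow> mcarrier V" using rep_closed by blast
next
  fix C C' q assume C: "C \<in> mcarrier quot" "C' \<in> mcarrier quot" and "q \<in> carrier Q"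
  then have "madd quot C C' = proj (madd V (rep C) (rep C'))"
    using proj_madd[OF rep_closed rep_closed] by (simp add: proj_rep)
  then show "tgen (rep (madd quot C C')) q - tgen (madd V (rep C) (rep C')) q \<in> tensor_rel R V Q \<phi>"
    using C \<open>q \<in> _\<close> by (simp add: tgen_rep_proj_in_tensor_rel rep_closed module_facts)
next
  fix C r q assume C: "C \<in> mcarrier quot" and r: "r \<in> carrier R" and "q \<in> carrier Q"
  then have "mact quot C r = proj (mact V (rep C) r)"
    using proj_mact[OF rep_closed r] by (simp add: proj_rep)
  then show "tgen (rep (mact quot C r)) q - tgen (mact V (rep C) r) q \<in> tensor_rel R V Q \<phi>"
    using C r \<open>q \<in> _\<close> by (simp add: tgen_rep_proj_in_tensor_rel rep_closed module_facts)
qed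

lemma map_left_proj_rep:
  "Poly_Mapping.keys f \<subseteq> mcarrier quot \<times> carrier Q \<Longrightarrow> map_left proj (map_left rep f) = f"
  unfolding map_left_compose by (rule map_left_id_on) (auto simp: proj_rep)

lemma map_left_rep_proj_in_tensor_rel:
  assumes "Poly_Mapping.keys f \<subseteq> mcarrier V \<times> carrier Q"
  shows "map_left rep (map_left proj f) - f \<in> tensor_rel R V Q \<phi>"
proof -
  have "map_left rep (map_left proj f) = frag_extend (\<lambda>p. tgen (rep (proj (fst p))) (snd p)) f"
    by (simp add: map_left_def frag_extend_frag_extend_frag_of tgen_eq_frag_of)
  moreover have "f = frag_extend (\<lambda>p. tgen (fst p) (snd p)) f"
    by (simp add: tgen_eq_frag_of flip: frag_expansion)
  ultimately have "map_left rep (map_left proj f) - f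
      = frag_extend (\<lambda>p. tgen (rep (proj (fst p))) (snd p) - tgen (fst p) (snd p)) f"
    by (metis frag_extend_diff_fun)
  also have "\<dots> \<in> tensor_rel R V Q \<phi>"
    using assms by (intro frag_extend_in_tensor_rel tgen_rep_proj_in_tensor_rel) auto
  finally show ?thesis .
qed

definition tensor_proj where "tensor_proj = tclass_image R quot Q \<phi> (map_left proj)"

lemma tensor_proj_tclass: "tensor_proj (tclass R V Q \<phi> f) = tclass R quot Q \<phi> (map_left proj f)"
  unfolding tensor_proj_def by (rule tclass_image_tclass[OF map_left_proj_in_tensor_rel map_left_add])

lemma inj_on_tensor_proj: "inj_on tensor_proj (mcarrier (tensor R V Q \<phi>))"
proof (rule inj_onI)
  fix C1 C2 assume "C1 \<in> mcarrier (tensor R V Q \<phi>)" "C2 \<in> mcarrier (tensor R V Q \<phi>)"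
    and eq: "tensor_proj C1 = tensor_proj C2"
  then obtain f1 f2 where C: "C1 = tclass R V Q \<phi> f1" "C2 = tclass R V Q \<phi> f2"
    and "Poly_Mapping.keys f1 \<subseteq> mcarrier V \<times> carrier Q" "Poly_Mapping.keys f2 \<subseteq> mcarrier V \<times> carrier Q"
    unfolding tensor_mcarrier by blast
  then have keys: "Poly_Mapping.keys (f1 - f2) \<subseteq> mcarrier V \<times> carrier Q"
    using keys_diff[of f1 f2] by blast
  have "map_left proj (f1 - f2) \<in> tensor_rel R quot Q \<phi>"
    using eq unfolding C tensor_proj_tclass tclass_eq_iff map_left_diff .
  then have "map_left rep (map_left proj (f1 - f2)) \<in> tensor_rel R V Q \<phi>"
    by (rule map_left_rep_in_tensor_rel)
  from tensor_rel_diff[OF this map_left_rep_proj_in_tensor_rel[OF keys]]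
  show "C1 = C2" unfolding C tclass_eq_iff by simp
qed

lemma tensor_proj_image: "tensor_proj ` mcarrier (tensor R V Q \<phi>) = mcarrier (tensor R quot Q \<phi>)"
proof (intro Set.set_eqI iffI)
  fix D assume "D \<in> tensor_proj ` mcarrier (tensor R V Q \<phi>)"
  then obtain f where D: "D = tclass R quot Q \<phi> (map_left proj f)"
    and f: "Poly_Mapping.keys f \<subseteq> mcarrier V \<times> carrier Q"
    unfolding tensor_mcarrier by (auto simp: tensor_proj_tclass)
  have "Poly_Mapping.keys (map_left proj f) \<subseteq> mcarrier quot \<times> carrier Q"
    using f by (rule keys_map_left) (simp add: quot_mcarrier)
  then show "D \<in> mcarrier (tensor R quot Q \<phi>)"
    unfolding D tensor_mcarrier[of R quot] by blast
next
  fix D assume "D \<in> mcarrier (tensor R quot Q \<phi>)"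
  then obtain f where f: "D = tclass R quot Q \<phi> f" "Poly_Mapping.keys f \<subseteq> mcarrier quot \<times> carrier Q"
    unfolding tensor_mcarrier by blast
  then have "D = tensor_proj (tclass R V Q \<phi> (map_left rep f))"
    by (simp add: tensor_proj_tclass map_left_proj_rep)
  moreover have "Poly_Mapping.keys (map_left rep f) \<subseteq> mcarrier V \<times> carrier Q"
    using f(2) by (rule keys_map_left) (use rep_closed in blast)
  ultimately show "D \<in> tensor_proj ` mcarrier (tensor R V Q \<phi>)"
    unfolding tensor_mcarrier[of R V] by blast
qed

theorem tensor_quotient_iso: "rmodule_iso Q (tensor R V Q \<phi>) (tensor R quot Q \<phi>)"
  unfolding rmodule_iso_def
proof (intro exI conjI ballI)
  show "bij_betw tensor_proj (mcarrier (tensor R V Q \<phi>)) (mcarrier (tensor R quot Q \<phi>))"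
    by (simp add: bij_betw_def inj_on_tensor_proj tensor_proj_image)
next
  fix C1 C2 assume "C1 \<in> mcarrier (tensor R V Q \<phi>)" "C2 \<in> mcarrier (tensor R V Q \<phi>)"
  then obtain f1 f2 where "C1 = tclass R V Q \<phi> f1" "C2 = tclass R V Q \<phi> f2"
    unfolding tensor_mcarrier by blast
  then show "tensor_proj (madd (tensor R V Q \<phi>) C1 C2) = madd (tensor R quot Q \<phi>) (tensor_proj C1) (tensor_proj C2)"
    by (simp add: tensor_madd_tclass tensor_proj_tclass map_left_add)
next
  fix C q assume "C \<in> mcarrier (tensor R V Q \<phi>)" and q: "q \<in> carrier Q"
  then obtain f where "C = tclass R V Q \<phi> f" unfolding tensor_mcarrier by blast
  then show "tensor_proj (mact (tensor R V Q \<phi>) C q) = mact (tensor R quot Q \<phi>) (tensor_proj C) q"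
    by (simp add: tensor_mact_tclass[OF ring_Q \<phi>_closed q] tensor_proj_tclass map_left_tact_rep)
qed

end

subsection \<open>Levels of a module over a generalized Weyl algebra\<close>

lemma sigma_pow_in_S_set:
  assumes "ring A" "a \<in> carrier A"
  shows "sigma_pow A \<sigma> n a \<in> S_set A \<sigma> a"
proof -
  interpret ring A by fact
  have "a [^]\<^bsub>A\<^esub> (1::nat) = a" using assms(2) by simp
  then show ?thesis unfolding S_set_def by (metis (mono_tags, lifting) mem_Collect_eq)
qed

lemma cprod_in_mult_closure:
  assumes "ring A" "a \<in> carrier A"
  shows "cprod A \<sigma> a l \<in> mult_closure A (S_set A \<sigma> a)"
proof (induction l)
  case 0
  have "sigma_pow A \<sigma> 0 a = a" unfolding sigma_pow_def by simp
  then show ?case using sigma_pow_in_S_set[OF assms, of \<sigma> 0] by (simp add: mult_closure.gen)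
next
  case (Suc l)
  then show ?case using sigma_pow_in_S_set[OF assms] by (simp add: mult_closure.gen mult_closure.mult)
qed

lemma gwa_incl_carrier: "gwa_incl A \<sigma> a u \<in> carrier (GWA A \<sigma> a)"
  unfolding gwa_incl_def GWA_def FactRing_def A_RCOSETS_def RCOSETS_def a_r_coset_def
  by (auto simp: free_ring_def)

lemma Vlev_e_subset_Vinf: "Vlev_e A \<sigma> a V h \<subseteq> Vinf A \<sigma> a V"
  unfolding Vlev_e_def Vinf_def by (cases h) auto

lemma Vinf_subset: "Vinf A \<sigma> a V \<subseteq> mcarrier V"
  unfolding Vinf_def Vlev_def by blast

lemma Vinf_tgen_in_tensor_rel:
  assumes "ring A" "a \<in> carrier A"
    and loc: "right_ring_of_fractions (GWA A \<sigma> a) (gwa_incl A \<sigma> a ` mult_closure A (S_set A \<sigma> a)) Q \<phi>"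
    and V: "right_module (GWA A \<sigma> a) V" and "v \<in> Vinf A \<sigma> a V" and "q \<in> carrier Q"
  shows "tgen v q \<in> tensor_rel (GWA A \<sigma> a) V Q \<phi>"
proof -
  obtain l where "v \<in> Vlev A \<sigma> a V l" using \<open>v \<in> Vinf A \<sigma> a V\<close> unfolding Vinf_def by blast
  moreover have "\<phi> (gwa_incl A \<sigma> a (cprod A \<sigma> a l)) \<in> Units Q"
    using loc cprod_in_mult_closure[OF assms(1,2)] unfolding right_ring_of_fractions_def by blast
  ultimately show ?thesis
    using loc \<open>q \<in> carrier Q\<close> unfolding Vlev_def right_ring_of_fractions_def
    by (auto intro: tgen_annihilated_in_tensor_rel[OF V] gwa_incl_carrier)
qed

theorem proposition2p4:
  fixes A :: "('a, 'b) ring_scheme" and \<sigma> :: "'a \<Rightarrow> 'a" and a :: 'a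
    and V :: "('m, 'a fword set, 'd) rmodule_scheme"
    and Q :: "('q, 'e) ring_scheme" and \<phi> :: "'a fword set \<Rightarrow> 'q"
  assumes "ring A"
    and "\<sigma> \<in> ring_iso A A"
    and "a \<in> center A"
    and "right_ring_of_fractions (GWA A \<sigma> a)
           (gwa_incl A \<sigma> a ` mult_closure A (S_set A \<sigma> a)) Q \<phi>"
    and "right_module (GWA A \<sigma> a) V"
  shows "rmodule_iso Q
           (tensor (GWA A \<sigma> a) V Q \<phi>)
           (tensor (GWA A \<sigma> a)
              (quotient_module V (gen_submodule (GWA A \<sigma> a) V
                 (Vlev_e A \<sigma> a V (height A \<sigma> a V))))
              Q \<phi>)"
proof -
  let ?W = "GWA A \<sigma> a" and ?B = "Vlev_e A \<sigma> a V (height A \<sigma> a V)"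
  have a: "a \<in> carrier A" using assms(3) by (simp add: center_def)
  have Q: "ring Q" and \<phi>: "\<phi> \<in> carrier ?W \<rightarrow> carrier Q"
    using assms(4) unfolding right_ring_of_fractions_def ring_hom_def by auto
  have B: "?B \<subseteq> mcarrier V" using subset_trans[OF Vlev_e_subset_Vinf Vinf_subset] .
  have B_tgen: "tgen b q \<in> tensor_rel ?W V Q \<phi>" if "b \<in> ?B" "q \<in> carrier Q" for b q
    using Vinf_tgen_in_tensor_rel[OF assms(1) a assms(4,5) subsetD[OF Vlev_e_subset_Vinf that(1)] that(2)] .
  interpret tensor_vanishing_submodule ?W V Q \<phi> "gen_submodule ?W V ?B"
    using assms(5) Q \<phi> gen_submodule_subset[OF assms(5) B]
      gen_submodule_tgen_in_tensor_rel[OF assms(5) B \<phi> Q B_tgen]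
    by (intro tensor_vanishing_submodule.intro) (auto intro: gen_submodule.intros)
  show ?thesis by (rule tensor_quotient_iso)
qed

end
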